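(* There is an absolute constant $c>0$ such that for all integers $\sigma\ge1$ and $n$ with $\sigma<n-1$, and every string $T\in[1..\sigma]^{n-1}\#$, the number of arcs of $\mathsf{CDAWG}_T$, namely $|\mathcal{E}^r_T|+|\mathcal{F}^r_T|$, is at least $c\log n$.
   Context: Let $\#=0\notin[1..\sigma]$ and $T\in[1..\sigma]^{n-1}\#$. For a string $W$, $\mathcal{P}_T(W)$ is the set of starting positions of occurrences of $W$ in circular $T$; $\Sigma^{\ell}_T(W)=\{a: \mathcal{P}_T(aW)\neq\emptyset\}$, $\Sigma^{r}_T(W)=\{b:\mathcal{P}_T(Wb)\ne\emptyset\}$. A repeat is a string $W$ (possibly empty) with $|\mathcal{P}_T(W)|>1$; right-maximal iff $|\Sigma^r_T(W)|>1$, left-maximal iff $|\Sigma^\ell_T(W)|>1$, maximal repeat iff both; $\mathcal{M}_T$ is the set of maximal repeats. $\mathsf{ST}_T$ is the suffix tree of $T$, $\ell(v)$ the label of node $v$. $\mathcal{E}^r_T$ (resp. $\mathcal{F}^r_T$) is the set of edges $(v,w)$ of $\mathsf{ST}_T$ with $v=\mathrm{parent}(w)$, $\ell(v)\in\mathcal{M}_T$ and $\ell(w)\in\mathcal{M}_T$ (resp. $\ell(w)\notin\mathcal{M}_T$). The compact directed acyclic word graph $\mathsf{CDAWG}_T$ is the minimal compact automaton of the suffixes of $T$; its nodes are the maximal repeats of $T$ (the empty string being the source) plus one sink, and its arcs are in one-to-one correspondence with $\mathcal{E}^r_T\cup\mathcal{F}^r_T$ (equivalently, with pairs $(W,b)$,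 $W\in\mathcal{M}_T$, $b\in\Sigma^r_T(W)$). *)

theory Defs
  imports Complex_Main
begin

text \<open>Strings are lists of naturals; the terminator # is 0.
  T is read circularly (length T = n).\<close>

definition occ :: "nat list \<Rightarrow> nat list \<Rightarrow> nat set" where
  "occ T W = {i. i < length T \<and>
      (\<forall>j < length W. T ! ((i + j) mod length T) = W ! j)}"

definition left_ext :: "nat list \<Rightarrow> nat list \<Rightarrow> nat set" where
  "left_ext T W = {a. occ T (a # W) \<noteq> {}}"

definition right_ext :: "nat list \<Rightarrow> nat list \<Rightarrow> nat set" where
  "right_ext T W = {b. occ T (W @ [b]) \<noteq> {}}"

definition is_repeat :: "nat list \<Rightarrow> nat list \<Rightarrow> bool" where
  "is_repeat T W \<longleftrightarrow> card (occ T W) > 1"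

definition maximal_repeats :: "nat list \<Rightarrow> nat list set" where
  "maximal_repeats T = {W. is_repeat T W \<and> card (right_ext T W) > 1
                           \<and> card (left_ext T W) > 1}"

text \<open>Arcs of the CDAWG: in bijection with pairs (W,b), W maximal repeat,
  b a right extension of W (equivalently, edges in E^r_T \<union> F^r_T).\<close>
definition cdawg_arcs :: "nat list \<Rightarrow> (nat list \<times> nat) set" where
  "cdawg_arcs T = {(W, b). W \<in> maximal_repeats T \<and> b \<in> right_ext T W}"

definition valid_text :: "nat \<Rightarrow> nat \<Rightarrow> nat list \<Rightarrow> bool" where
  "valid_text \<sigma> n T \<longleftrightarrow> length T = n \<and> n \<ge> 1 \<and> T ! (n - 1) = 0 \<and>
     (\<forall>i < n - 1. T ! i \<in> {1..\<sigma>})"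

end

theory Submission
  imports Defs "HOL-Library.Sublist"
begin

text \<open>Every suffix of \<open>T\<close> is spelled by a path from the source of the CDAWG, and since the
  terminator occurs only once, distinct suffixes diverge after a common right-maximal prefix and
  hence leave its node through different arcs. A path in a DAG is determined by its set of arcs,
  so the \<open>n\<close> suffixes force \<open>n \<le> 2\<^sup>e\<close> for \<open>e\<close> arcs, i.e. \<open>e \<ge> log\<^sub>2 n \<ge> ln n\<close>.\<close>

definition circ_nth :: "nat list \<Rightarrow> nat \<Rightarrow> nat" where
  "circ_nth T x = T ! (x mod length T)"

lemma occ_circ_nth: "occ T W = {i. i < length T \<and> (\<forall>j < length W. circ_nth T (i + j) = W ! j)}"
  by (simp add: occ_def circ_nth_def)

lemma circ_nth_mod_add: "circ_nth T (x mod length T + y) = circ_nth T (x + y)"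
  by (simp add: circ_nth_def mod_add_left_eq)

lemma occ_subset_lessThan: "occ T W \<subseteq> {..<length T}"
  by (auto simp: occ_def)

lemma finite_occ: "finite (occ T W)"
  using occ_subset_lessThan finite_subset by blast

lemma inj_on_add_mod: "inj_on (\<lambda>k. (k + m) mod n) {..<n::nat}"
proof -
  have "k1 = k2" if "k1 \<le> k2" "k2 < n" "(k1 + m) mod n = (k2 + m) mod n" for k1 k2
  proof (rule ccontr)
    assume "k1 \<noteq> k2"
    have "n dvd k2 - k1"
      using that mod_eq_dvd_iff_nat[of "k1 + m" "k2 + m" n] by simp
    moreover have "0 < k2 - k1"
      using that(1) \<open>k1 \<noteq> k2\<close> by simp
    ultimately have "n \<le> k2 - k1"
      by (rule dvd_imp_le)
    with that(2) show False
      by simp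
  qed
  then show ?thesis
    by (intro inj_onI) (simp, metis le_cases)
qed

lemma all_less_length_append:
  "(\<forall>j < length (U @ V). P j ((U @ V) ! j)) \<longleftrightarrow>
     (\<forall>j < length U. P j (U ! j)) \<and> (\<forall>j < length V. P (length U + j) (V ! j))"
proof (intro iffI conjI allI impI)
  assume all: "\<forall>j < length (U @ V). P j ((U @ V) ! j)"
  show "P j (U ! j)" if "j < length U" for j
    using all[rule_format, of j] that by (simp add: nth_append)
  show "P (length U + j) (V ! j)" if "j < length V" for j
    using all that by (metis length_append nat_add_left_cancel_less nth_append_length_plus)
next
  fix j
  assume "(\<forall>j < length U. P j (U ! j)) \<and> (\<forall>j < length V. P (length U + j) (V ! j))"
    and "j < length (U @ V)"
  then show "P j ((U @ V) ! j)"
    by (cases "j < length U") (auto simp: nth_append dest: spec[of _ "j - length U"])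
qed

lemma occ_append_iff:
  "k \<in> occ T (U @ V) \<longleftrightarrow> k \<in> occ T U \<and> (k + length U) mod length T \<in> occ T V"
proof (cases "k < length T")
  case True
  then have "(k + length U) mod length T < length T"
    by (intro mod_less_divisor) auto
  with True show ?thesis
    using all_less_length_append[of U V "\<lambda>j x. circ_nth T (k + j) = x"]
    by (simp add: occ_circ_nth circ_nth_mod_add add.assoc)
qed (simp add: occ_def)

lemma occ_snoc_iff: "k \<in> occ T (W @ [b]) \<longleftrightarrow> k \<in> occ T W \<and> circ_nth T (k + length W) = b"
  unfolding occ_append_iff by (auto simp: occ_def circ_nth_def intro!: mod_less_divisor)

lemma occ_prefix_subset: "prefix U V \<Longrightarrow> occ T V \<subseteq> occ T U"
  by (auto simp: prefix_def occ_append_iff)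

lemma card_occ_append_le: "card (occ T (U @ V)) \<le> card (occ T V)"
proof (rule card_inj_on_le)
  show "inj_on (\<lambda>k. (k + length U) mod length T) (occ T (U @ V))"
    using inj_on_add_mod occ_subset_lessThan by (rule inj_on_subset)
qed (auto simp: occ_append_iff finite_occ)

lemma prefix_drop_occ:
  assumes "prefix U (drop i T)" and "i < length T"
  shows "i \<in> occ T U"
proof -
  obtain Z where Z: "drop i T = U @ Z"
    using assms(1) by (auto simp: prefix_def)
  have "T ! ((i + j) mod length T) = U ! j" if "j < length U" for j
  proof -
    have "i + j < length T"
      using that arg_cong[OF Z, of length] by simp
    then show ?thesis
      using that arg_cong[OF Z, of "\<lambda>xs. xs ! j"] by (simp add: nth_append)
  qed
  with assms(2) show ?thesis
    by (simp add: occ_def)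
qed

lemma set_subset_if_occ:
  assumes "occ T W \<noteq> {}"
  shows "set W \<subseteq> set T"
proof
  fix x assume "x \<in> set W"
  then obtain j where j: "j < length W" "W ! j = x"
    by (auto simp: in_set_conv_nth)
  obtain k where k: "k \<in> occ T W"
    using assms by blast
  then have "x = T ! ((k + j) mod length T)" and "k < length T"
    using j by (auto simp: occ_def)
  then show "x \<in> set T"
    by (metis gr_implies_not0 mod_less_divisor not_gr_zero nth_mem)
qed

lemma right_ext_subset_set: "right_ext T W \<subseteq> set T"
  using set_subset_if_occ[of T "W @ [_]"] by (auto simp: right_ext_def)

lemma left_ext_subset_set: "left_ext T W \<subseteq> set T"
  using set_subset_if_occ[of T "_ # W"] by (auto simp: left_ext_def)

lemma finite_right_ext: "finite (right_ext T W)"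
  using right_ext_subset_set finite_subset by blast

lemma finite_left_ext: "finite (left_ext T W)"
  using left_ext_subset_set finite_subset by blast

definition uniquely_terminated :: "nat list \<Rightarrow> bool" where
  "uniquely_terminated T \<longleftrightarrow> T \<noteq> [] \<and> (\<forall>i < length T. T ! i = 0 \<longleftrightarrow> i = length T - 1)"

lemma valid_text_uniquely_terminated:
  assumes "valid_text \<sigma> n T"
  shows "uniquely_terminated T"
  unfolding uniquely_terminated_def
proof (intro conjI allI impI)
  show "T \<noteq> []"
    using assms by (auto simp: valid_text_def)
  fix i assume "i < length T"
  then consider "i = length T - 1" | "i < length T - 1"
    by linarith
  then show "T ! i = 0 \<longleftrightarrow> i = length T - 1"
    by cases (use assms in \<open>auto simp: valid_text_def\<close>)
qed

lemma uniquely_terminated_nth_eq_0_iff: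
  "uniquely_terminated T \<Longrightarrow> i < length T \<Longrightarrow> T ! i = 0 \<longleftrightarrow> i = length T - 1"
  by (simp add: uniquely_terminated_def)

lemma repeat_length_less:
  assumes T: "uniquely_terminated T" and rep: "card (occ T W) > 1"
  shows "length W < length T"
proof (rule ccontr)
  let ?n = "length T"
  assume long: "\<not> length W < ?n"
  obtain k1 k2 where k: "k1 \<in> occ T W" "k2 \<in> occ T W" "k1 \<noteq> k2"
    using rep card_le_Suc0_iff_eq[OF finite_occ, of T W] by auto
  then have k_less: "k1 < ?n" "k2 < ?n"
    by (auto simp: occ_def)
  define m where "m = ?n - 1 - k1"
  have "m < length W"
    using long k_less by (simp add: m_def)
  then have "T ! ((k2 + m) mod ?n) = T ! ((k1 + m) mod ?n)"
    using k by (simp add: occ_def)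
  also have k1_end: "(k1 + m) mod ?n = ?n - 1"
    using k_less by (simp add: m_def)
  finally have "T ! ((k2 + m) mod ?n) = 0"
    using uniquely_terminated_nth_eq_0_iff[OF T] k_less by simp
  moreover have "(k2 + m) mod ?n < ?n"
    using k_less by (intro mod_less_divisor) auto
  ultimately have "(k2 + m) mod ?n = (k1 + m) mod ?n"
    using uniquely_terminated_nth_eq_0_iff[OF T] k1_end by simp
  then show False
    using inj_on_add_mod[of m ?n] k_less k(3) by (auto dest: inj_onD)
qed

lemma not_prefix_drop:
  assumes T: "uniquely_terminated T"
    and ij: "i < length T" "j < length T" "i \<noteq> j"
  shows "\<not> prefix (drop i T) (drop j T)"
proof
  assume "prefix (drop i T) (drop j T)"
  then obtain Z where Z: "drop j T = drop i T @ Z"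
    by (auto simp: prefix_def)
  then have "length (drop j T) = length (drop i T) + length Z"
    by simp
  then have "j < i"
    using ij by simp
  let ?p = "length T - 1 - i"
  have "?p < length (drop i T)"
    using ij by simp
  then have "drop j T ! ?p = drop i T ! ?p"
    using Z by (simp add: nth_append)
  then have "T ! (j + ?p) = T ! (i + ?p)"
    using ij by simp
  also have "\<dots> = 0"
    using uniquely_terminated_nth_eq_0_iff[OF T] ij by simp
  moreover have "j + ?p < length T - 1" and "j + ?p < length T"
    using ij \<open>j < i\<close> by linarith+
  ultimately show False
    using uniquely_terminated_nth_eq_0_iff[OF T, of "j + ?p"] by simp
qed

lemma drop_parallel:
  "uniquely_terminated T \<Longrightarrow> i < length T \<Longrightarrow> j < length T \<Longrightarrow> i \<noteq> j
    \<Longrightarrow> drop i T \<parallel> drop j T"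
  by (simp add: not_prefix_drop parallelI)

lemma right_ext_strict_prefix_same_occ:
  assumes "strict_prefix U V" and "card (occ T U) = card (occ T V)"
  shows "right_ext T U \<subseteq> {V ! length U}"
proof
  obtain Z' where "V = U @ Z'" "Z' \<noteq> []"
    using assms(1) by (auto simp: strict_prefix_def prefix_def)
  then obtain c Z where V: "V = U @ c # Z"
    by (cases Z') auto
  have "occ T V = occ T U"
    using card_subset_eq[OF finite_occ occ_prefix_subset] assms by (metis prefix_order.less_imp_le)
  fix b assume "b \<in> right_ext T U"
  then obtain k where "k \<in> occ T (U @ [b])"
    by (auto simp: right_ext_def)
  then have "k \<in> occ T (U @ [c])" and "circ_nth T (k + length U) = b"
    using \<open>occ T V = occ T U\<close> occ_prefix_subset[of "U @ [c]" V T]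
    by (auto simp: occ_snoc_iff V)
  then show "b \<in> {V ! length U}"
    by (simp add: occ_snoc_iff V)
qed

lemma right_maximal_prefixes_eq:
  assumes "prefix U S" "prefix V S" "card (occ T U) = card (occ T V)"
    and "card (right_ext T U) > 1" "card (right_ext T V) > 1"
  shows "U = V"
proof -
  have no_strict: "\<not> strict_prefix X Y"
    if "card (occ T X) = card (occ T Y)" "card (right_ext T X) > 1" for X Y
  proof
    assume "strict_prefix X Y"
    then have "card (right_ext T X) \<le> card {Y ! length X}"
      using that(1) by (intro card_mono right_ext_strict_prefix_same_occ) simp_all
    with that(2) show False
      by simp
  qed
  show ?thesis
    using prefix_same_cases[OF assms(1,2)] no_strict[OF assms(3,4)]
      no_strict[OF assms(3)[symmetric] assms(5)]
    by (auto simp: strict_prefix_def)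
qed

lemma right_ext_subset_append_same_occ:
  assumes "card (occ T (A @ P)) = card (occ T P)"
  shows "right_ext T P \<subseteq> right_ext T (A @ P)"
proof
  let ?shift = "\<lambda>k. (k + length A) mod length T"
  have "?shift ` occ T (A @ P) \<subseteq> occ T P"
    by (auto simp: occ_append_iff)
  moreover have "inj_on ?shift (occ T (A @ P))"
    using inj_on_add_mod occ_subset_lessThan by (rule inj_on_subset)
  ultimately have shift_onto: "?shift ` occ T (A @ P) = occ T P"
    using assms by (simp add: card_subset_eq finite_occ card_image)
  fix b assume "b \<in> right_ext T P"
  then obtain k where "k \<in> occ T (P @ [b])"
    by (auto simp: right_ext_def)
  moreover from this have "k \<in> occ T P"
    by (simp add: occ_snoc_iff)
  then obtain k' where "k' \<in> occ T (A @ P)" "k = ?shift k'"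
    using shift_onto by blast
  ultimately have "k' \<in> occ T ((A @ P) @ [b])"
    by (simp add: occ_append_iff)
  then show "b \<in> right_ext T (A @ P)"
    by (auto simp: right_ext_def)
qed

text \<open>Since \<open>T\<close> is circular, every occurrence of \<open>V\<close> is preceded by some letter; a unique
  left extension therefore keeps all occurrences.\<close>
lemma left_ext_unique_extends:
  assumes "occ T V \<noteq> {}" and "card (left_ext T V) \<le> 1"
  obtains a where "card (occ T (a # V)) = card (occ T V)"
proof -
  let ?n = "length T"
  let ?pred = "\<lambda>k. (k + (?n - 1)) mod ?n"
  have pred_occ: "?pred k \<in> occ T ([T ! ?pred k] @ V)" if "k \<in> occ T V" for k
  proof -
    have "k < ?n"
      using that by (simp add: occ_def)
    have "(?pred k + length [T ! ?pred k]) mod ?n = (k + (?n - 1) + 1) mod ?n"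
      by (simp add: mod_Suc_eq)
    also have "k + (?n - 1) + 1 = k + ?n"
      using \<open>k < ?n\<close> by linarith
    also have "(k + ?n) mod ?n = k"
      using \<open>k < ?n\<close> by simp
    finally have "(?pred k + length [T ! ?pred k]) mod ?n = k" .
    moreover have "?pred k \<in> occ T [T ! ?pred k]"
      using \<open>k < ?n\<close> by (auto simp: occ_def intro!: mod_less_divisor)
    ultimately show ?thesis
      using that unfolding occ_append_iff by simp
  qed
  then have left: "T ! ?pred k \<in> left_ext T V" if "k \<in> occ T V" for k
    using that by (auto simp: left_ext_def)
  obtain k0 where k0: "k0 \<in> occ T V"
    using assms(1) by blast
  let ?a = "T ! ?pred k0"
  have "T ! ?pred k = ?a" if "k \<in> occ T V" for k
    using left[OF that] left[OF k0] assms(2) finite_left_ext card_le_Suc0_iff_eq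
    by (metis One_nat_def)
  then have "?pred ` occ T V \<subseteq> occ T (?a # V)"
    using pred_occ by force
  moreover have "inj_on ?pred (occ T V)"
    using inj_on_add_mod occ_subset_lessThan by (rule inj_on_subset)
  ultimately have "card (occ T V) \<le> card (occ T (?a # V))"
    using card_inj_on_le finite_occ by blast
  moreover have "card (occ T (?a # V)) \<le> card (occ T V)"
    using card_occ_append_le[of T "[?a]" V] by simp
  ultimately show thesis
    using that[of ?a] by simp
qed

lemma longest_left_extension_same_occ:
  assumes T: "uniquely_terminated T" and rep: "card (occ T P) > 1"
  obtains A where "card (occ T (A @ P)) = card (occ T P)"
    and "\<And>A'. card (occ T (A' @ P)) = card (occ T P) \<Longrightarrow> length A' \<le> length A"
proof -
  let ?extends = "\<lambda>l. \<exists>A. length A = l \<and> card (occ T (A @ P)) = card (occ T P)"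
  have "length A \<le> length T" if "card (occ T (A @ P)) = card (occ T P)" for A
    using repeat_length_less[OF T, of "A @ P"] rep that by simp
  then have "\<forall>l. ?extends l \<longrightarrow> l \<le> length T"
    by blast
  then obtain l where "?extends l" and "\<forall>l'. ?extends l' \<longrightarrow> l' \<le> l"
    using Nat.ex_has_greatest_nat[where P = ?extends and k = 0 and b = "length T"] by auto
  then show thesis
    using that by blast
qed

lemma right_maximal_repeat_extends_to_maximal:
  assumes T: "uniquely_terminated T"
    and rep: "card (occ T P) > 1" and rmax: "card (right_ext T P) > 1"
  obtains W where "W \<in> maximal_repeats T" "card (occ T W) = card (occ T P)"
    "right_ext T P \<subseteq> right_ext T W"
proof -
  obtain A where A: "card (occ T (A @ P)) = card (occ T P)"
    and longest: "\<And>A'. card (occ T (A' @ P)) = card (occ T P) \<Longrightarrow> length A' \<le> length A"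
    using longest_left_extension_same_occ[OF T rep] by blast
  have right: "right_ext T P \<subseteq> right_ext T (A @ P)"
    using A by (rule right_ext_subset_append_same_occ)
  then have "card (right_ext T (A @ P)) > 1"
    using rmax card_mono[OF finite_right_ext] by (meson less_le_trans)
  moreover have "card (left_ext T (A @ P)) > 1"
  proof (rule ccontr)
    assume "\<not> card (left_ext T (A @ P)) > 1"
    moreover have "occ T (A @ P) \<noteq> {}"
      using A rep by auto
    ultimately obtain a where "card (occ T ((a # A) @ P)) = card (occ T (A @ P))"
      using left_ext_unique_extends[of T "A @ P"] by auto
    then show False
      using longest[of "a # A"] A by simp
  qed
  ultimately show thesis
    using that[of "A @ P"] A rep right
    by (simp add: maximal_repeats_def is_repeat_def)
qed

lemma finite_cdawg_arcs:
  assumes "uniquely_terminated T"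
  shows "finite (cdawg_arcs T)"
proof -
  have "maximal_repeats T \<subseteq> {W. set W \<subseteq> set T \<and> length W \<le> length T}"
  proof
    fix W assume "W \<in> maximal_repeats T"
    then have "card (occ T W) > 1"
      by (simp add: maximal_repeats_def is_repeat_def)
    then have "occ T W \<noteq> {}" and "length W < length T"
      using repeat_length_less[OF assms] by auto
    then show "W \<in> {W. set W \<subseteq> set T \<and> length W \<le> length T}"
      using set_subset_if_occ by simp
  qed
  then have "finite (maximal_repeats T)"
    using finite_lists_length_le finite_subset by blast
  moreover have "cdawg_arcs T \<subseteq> maximal_repeats T \<times> set T"
    using right_ext_subset_set by (auto simp: cdawg_arcs_def)
  ultimately show ?thesis
    by (meson finite_SigmaI finite_set finite_subset)
qed

text \<open>The arcs of the CDAWG path spelling the suffix starting at \<open>i\<close>: a right-maximal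
  prefix \<open>U\<close> of that suffix lies on the node \<open>W\<close> reached by extending \<open>U\<close> to the left without
  losing occurrences, and the path leaves \<open>W\<close> through the arc labelled by the next letter.\<close>
definition path_arcs :: "nat list \<Rightarrow> nat \<Rightarrow> (nat list \<times> nat) set" where
  "path_arcs T i = {(W, b) \<in> cdawg_arcs T. \<exists>U. prefix (U @ [b]) (drop i T) \<and>
     card (right_ext T U) > 1 \<and> card (occ T W) = card (occ T U)}"

lemma inj_on_path_arcs:
  assumes T: "uniquely_terminated T"
  shows "inj_on (path_arcs T) {..<length T}"
proof (rule inj_onI, rule ccontr)
  fix i j
  assume ij: "i \<in> {..<length T}" "j \<in> {..<length T}" "i \<noteq> j"
    and same_path: "path_arcs T i = path_arcs T j"
  obtain P b1 r1 b2 r2 where b: "b1 \<noteq> b2"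
    and i_suffix: "drop i T = P @ b1 # r1" and j_suffix: "drop j T = P @ b2 # r2"
    using parallel_decomp[OF drop_parallel[OF T]] ij by blast
  have occ_i: "i \<in> occ T (P @ [b1])" and occ_j: "j \<in> occ T (P @ [b2])"
    using prefix_drop_occ ij i_suffix j_suffix by (auto simp: prefix_def)
  then have "{i, j} \<subseteq> occ T P"
    by (simp add: occ_snoc_iff)
  then have "card {i, j} \<le> card (occ T P)"
    by (rule card_mono[OF finite_occ])
  then have rep: "card (occ T P) > 1"
    using ij(3) by simp
  have b1: "b1 \<in> right_ext T P" and "b2 \<in> right_ext T P"
    using occ_i occ_j by (auto simp: right_ext_def)
  then have "card {b1, b2} \<le> card (right_ext T P)"
    by (intro card_mono[OF finite_right_ext]) simp
  then have rmax: "card (right_ext T P) > 1"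
    using b by simp
  obtain W where W: "W \<in> maximal_repeats T" "card (occ T W) = card (occ T P)"
    "right_ext T P \<subseteq> right_ext T W"
    using right_maximal_repeat_extends_to_maximal[OF T rep rmax] by blast
  have "(W, b1) \<in> cdawg_arcs T"
    using W(1,3) b1 by (auto simp: cdawg_arcs_def)
  moreover have "prefix (P @ [b1]) (drop i T)"
    by (simp add: i_suffix)
  ultimately have "(W, b1) \<in> path_arcs T i"
    using rmax W(2) unfolding path_arcs_def by blast
  then have "(W, b1) \<in> path_arcs T j"
    using same_path by simp
  then obtain U where U: "prefix (U @ [b1]) (drop j T)" "card (right_ext T U) > 1"
    "card (occ T W) = card (occ T U)"
    by (auto simp: path_arcs_def)
  have "prefix U (drop j T)" and "prefix P (drop j T)"
    using U(1) by (auto simp: j_suffix dest: append_prefixD)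
  then have "U = P"
    using right_maximal_prefixes_eq U(2,3) W(2) rmax by metis
  then show False
    using U(1) j_suffix b by simp
qed

lemma length_le_two_pow_card_cdawg_arcs:
  assumes "uniquely_terminated T"
  shows "length T \<le> 2 ^ card (cdawg_arcs T)"
proof -
  have "path_arcs T ` {..<length T} \<subseteq> Pow (cdawg_arcs T)"
    by (auto simp: path_arcs_def)
  with inj_on_path_arcs[OF assms] have "card {..<length T} \<le> card (Pow (cdawg_arcs T))"
    by (rule card_inj_on_le) (simp add: finite_cdawg_arcs[OF assms])
  then show ?thesis
    by (simp add: card_Pow finite_cdawg_arcs[OF assms])
qed

theorem lemma4:
  "\<exists>c::real > 0. \<forall>\<sigma> n T. \<sigma> \<ge> 1 \<and> \<sigma> + 1 < n \<and> valid_text \<sigma> n T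
      \<longrightarrow> real (card (cdawg_arcs T)) \<ge> c * ln (real n)"
proof (intro exI[of _ 1] conjI allI impI)
  fix \<sigma> n T assume "\<sigma> \<ge> 1 \<and> \<sigma> + 1 < n \<and> valid_text \<sigma> n T"
  then have n: "length T = n" "n \<ge> 1" and T: "uniquely_terminated T"
    using valid_text_uniquely_terminated by (auto simp: valid_text_def)
  define e where "e = card (cdawg_arcs T)"
  have "real n \<le> 2 ^ e"
    using length_le_two_pow_card_cdawg_arcs[OF T] n by (simp add: e_def flip: of_nat_le_iff)
  then have "ln (real n) \<le> ln (2 ^ e)"
    using n by (intro ln_mono) auto
  also have "\<dots> = real e * ln 2"
    by (simp add: ln_realpow)
  also have "\<dots> \<le> real e"
    using ln_2_less_1 by (simp add: mult_left_le)
  finally show "1 * ln (real n) \<le> real (card (cdawg_arcs T))"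
    by (simp add: e_def)
qed simp

end
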